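(* Fix $c_5\in(0,c_4)$ and put $c_6=c_4-c_5$. There is $c_7>0$ such that for all $\beta$ large enough, $$\sup_{E\Subset\Lambda}\ \sup_{o\in E}\ \sum_{J\in\mathcal J(E):\,o\in\mathrm{supp}\,J}e^{-\beta c_6\,\mathrm{size}\,J}\le e^{-\beta c_7}.$$ Furthermore, with $K(J)=e^{-\beta c_4\,\mathrm{size}\,J}$ and $a(J)=\beta c_5\eta|\mathrm{supp}\,J|$ for $J\in\mathcal J(E)$: for every finite $\tilde{\mathcal J}\subseteq\mathcal J(E)$, $$\sup_{E\Subset\Lambda}\sup_{o\in E}\sum_{J\in\tilde{\mathcal J}:\,o\in\mathrm{supp}\,J}K(J)e^{a(J)}\le e^{-\beta c_7},$$ and, for all $\beta$ large enough (uniformly in $E$ and $\tilde{\mathcal J}$), for every $I\in\tilde{\mathcal J}$, $$\sum_{J\in\tilde{\mathcal J}}K(J)\,1_{\{I\sim J\}}\,e^{a(J)}\le a(I).$$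
   Context: $\Gamma\subset\mathbb{R}^3$ is a rank-3 lattice, $\eta=\min\{|\gamma|:\gamma\in\Gamma\setminus\{0\}\}$. $(V_\Lambda,\Lambda)$ is a periodic lattice graph in $\mathbb{R}^3$ of bounded degree; edges carry counting directions and $s_{ve}\in\{1,-1,0\}$ is the signed incidence ($1$ if $v$ is the head of $e$, $-1$ if the tail, $0$ otherwise). For finite $E\subset\Lambda$ (written $E\Subset\Lambda$) with endpoint set $V$, $\mathcal I(E)=\{I\in\Gamma^E:\sum_es_{ve}I_e=0\ \forall v\in V\}$, $\|I\|_1=\sum_e|I_e|$, $\mathrm{supp}\,I=\{e:I_e\neq0\}$. A set of edges is connected if the graph formed by these edges (with their endpoints) is connected. $\mathcal J(E)=\{I\in\mathcal I(E):\mathrm{supp}\,I\text{ nonempty and connected}\}$. Two elements $I,J$ are incompatible, $I\sim J$, if some edge of $\mathrm{supp}\,I$ shares a vertex with some edge of $\mathrm{supp}\,J$ (so $I\sim I$). $\mathrm{size}\,I=\|I\|_1+\mathrm{diam}\,\mathrm{supp}\,I$, where diam is the diameter in the graph distance of the mesoscopic graph (maximal graph distance between endpoints of edges in the set). Constants: $c>0$ is the constant in the lower bound $H_{\mathrm{disl}}(I)\ge c\|I\|_1$, $c_3=1+\eta^{-1}$, $c_4=c/(2c_3)$. "$\beta$ large enough" means $\beta>\beta_0$ with $\beta_0$ depending only on $\Gamma$, the mesoscopic graph, $c$ (and $c_5$). *)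

theory Defs
  imports "HOL-Analysis.Analysis"
begin

type_synonym pt = "real^3"
type_synonym edge = "pt \<times> pt"   (* (tail, head): the counting direction *)

definition rank3_lattice :: "pt set \<Rightarrow> bool" where
  "rank3_lattice L \<longleftrightarrow> (\<exists>b1 b2 b3. card {b1, b2, b3} = 3 \<and> independent {b1, b2, b3} \<and>
      L = {of_int i *\<^sub>R b1 + of_int j *\<^sub>R b2 + of_int k *\<^sub>R b3 | i j k. True})"

definition eta :: "pt set \<Rightarrow> real" where
  "eta \<Gamma> = Inf (norm ` (\<Gamma> - {0}))"

definition periodic_bdd_graph :: "edge set \<Rightarrow> bool" where
  "periodic_bdd_graph \<Lambda> \<longleftrightarrow>
     (\<forall>e\<in>\<Lambda>. fst e \<noteq> snd e) \<and>
     (\<exists>L F. rank3_lattice L \<and> finite F \<and> F \<subseteq> \<Lambda> \<and>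
        \<Lambda> = {(u + l, v + l) | u v l. (u, v) \<in> F \<and> l \<in> L}) \<and>
     (\<exists>D::nat. \<forall>v. finite {e\<in>\<Lambda>. fst e = v \<or> snd e = v} \<and>
                    card {e\<in>\<Lambda>. fst e = v \<or> snd e = v} \<le> D)"

definition verts :: "edge set \<Rightarrow> pt set" where
  "verts E = fst ` E \<union> snd ` E"

definition sinc :: "pt \<Rightarrow> edge \<Rightarrow> real" where
  "sinc v e = (if v = snd e then 1 else if v = fst e then -1 else 0)"

definition currents :: "pt set \<Rightarrow> edge set \<Rightarrow> (edge \<Rightarrow> pt) set" where
  "currents \<Gamma> E = {I. (\<forall>e\<in>E. I e \<in> \<Gamma>) \<and> (\<forall>e. e \<notin> E \<longrightarrow> I e = 0) \<and>
      (\<forall>v\<in>verts E. (\<Sum>e\<in>E. sinc v e *\<^sub>R I e) = 0)}"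

definition norm1 :: "edge set \<Rightarrow> (edge \<Rightarrow> pt) \<Rightarrow> real" where
  "norm1 E I = (\<Sum>e\<in>E. norm (I e))"

definition supp :: "edge set \<Rightarrow> (edge \<Rightarrow> pt) \<Rightarrow> edge set" where
  "supp E I = {e\<in>E. I e \<noteq> 0}"

definition share_vertex :: "edge \<Rightarrow> edge \<Rightarrow> bool" where
  "share_vertex e e' \<longleftrightarrow> verts {e} \<inter> verts {e'} \<noteq> {}"

definition edges_connected :: "edge set \<Rightarrow> bool" where
  "edges_connected F \<longleftrightarrow>
     (\<forall>e\<in>F. \<forall>e'\<in>F. (e, e') \<in> {(x, y). x \<in> F \<and> y \<in> F \<and> share_vertex x y}\<^sup>*)"

definition Jset :: "pt set \<Rightarrow> edge set \<Rightarrow> (edge \<Rightarrow> pt) set" where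
  "Jset \<Gamma> E = {I \<in> currents \<Gamma> E. supp E I \<noteq> {} \<and> edges_connected (supp E I)}"

definition incompat :: "edge set \<Rightarrow> (edge \<Rightarrow> pt) \<Rightarrow> (edge \<Rightarrow> pt) \<Rightarrow> bool" where
  "incompat E I J \<longleftrightarrow> (\<exists>e\<in>supp E I. \<exists>e'\<in>supp E J. share_vertex e e')"

definition gdist :: "edge set \<Rightarrow> pt \<Rightarrow> pt \<Rightarrow> nat" where
  "gdist \<Lambda> u v = (LEAST n. (u, v) \<in> (\<Lambda> \<union> \<Lambda>\<inverse>) ^^ n)"

definition gdiam :: "edge set \<Rightarrow> edge set \<Rightarrow> nat" where
  "gdiam \<Lambda> F = Max {gdist \<Lambda> u v | u v. u \<in> verts F \<and> v \<in> verts F}"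

definition size :: "edge set \<Rightarrow> edge set \<Rightarrow> (edge \<Rightarrow> pt) \<Rightarrow> real" where
  "size \<Lambda> E I = norm1 E I + real (gdiam \<Lambda> (supp E I))"

end

theory Submission
  imports Defs
begin

text \<open>
  Put \<open>b = \<beta> c6\<close>. Since \<open>size J\<close> dominates \<open>\<Sum>e\<in>supp J. |J e|\<close>, the weights
  \<open>exp (- b size J)\<close> of the currents with a given support S sum to at most \<open>Q ^ |S|\<close>, where
  Q bounds the sums of \<open>exp (- b |\<gamma>|)\<close> over nonzero lattice vectors; as the norm of a lattice
  vector grows linearly in its coordinates, Q decays like \<open>exp (- b \<delta>)\<close> for some
  \<open>0 < \<delta> \<le> \<eta>\<close>. The supports through a fixed edge are connected, and a connected set of n
  edges is recovered from a walk of length 2n - 1 covering it, so there are at most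
  \<open>M ^ (2n - 2)\<close> of them, M bounding the number of edges that touch an edge. Hence the total
  is at most \<open>\<Sum>n. M ^ (2n - 2) Q ^ n \<le> 2 Q \<le> exp (- \<beta> c7)\<close> once \<open>\<beta>\<close> is large.
  The second estimate follows from \<open>a(J) \<le> \<beta> c5 size J\<close>; the third applies it to each
  of the at most \<open>M |supp I|\<close> edges touching \<open>supp I\<close>, using \<open>M \<le> \<beta> c5 \<eta>\<close>.
\<close>

section \<open>Connected edge sets\<close>

lemma rtrancl_leaves_set:
  assumes "(a, b) \<in> R\<^sup>*" "a \<in> S" "b \<notin> S"
  shows "\<exists>u v. (u, v) \<in> R \<and> u \<in> S \<and> v \<notin> S"
  using assms by (induction rule: rtrancl_induct) blast+

lemma share_vertex_sym: "share_vertex e e' \<Longrightarrow> share_vertex e' e"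
  by (auto simp: share_vertex_def)

lemma edges_connected_boundary:
  assumes "edges_connected F" "S \<subseteq> F" "x \<in> S" "y \<in> F - S"
  shows "\<exists>z\<in>S. \<exists>y'\<in>F - S. share_vertex z y'"
proof -
  have "(x, y) \<in> {(x, y). x \<in> F \<and> y \<in> F \<and> share_vertex x y}\<^sup>*"
    using assms unfolding edges_connected_def by blast
  then show ?thesis
    using rtrancl_leaves_set[of x y _ S] assms(3,4) by blast
qed

lemma successively_insert_detour:
  "successively P (u @ z # v) \<Longrightarrow> P z y \<Longrightarrow> P y z \<Longrightarrow> successively P (u @ z # y # z # v)"
  by (cases v) (auto simp: successively_append_iff)

lemma covering_walk_extend:
  assumes "finite F" "edges_connected F" "set w \<subseteq> F" "w \<noteq> []" "successively share_vertex w"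
    "length w = 2 * card (set w) - 1"
  shows "\<exists>w'. hd w' = hd w \<and> set w' = F \<and> successively share_vertex w' \<and>
    length w' = 2 * card F - 1"
  using assms
proof (induction "card (F - set w)" arbitrary: w rule: less_induct)
  case less
  show ?case
  proof (cases "set w = F")
    case True
    then show ?thesis using less.prems by blast
  next
    case False
    then obtain y0 where "y0 \<in> F - set w" using less.prems(3) by blast
    then obtain z y where z: "z \<in> set w" and y: "y \<in> F - set w" and zy: "share_vertex z y"
      using edges_connected_boundary[OF less.prems(2,3) hd_in_set[OF less.prems(4)]] by blast
    obtain u v where w: "w = u @ z # v" using z split_list by metis
    define w' where "w' = u @ z # y # z # v"
    have set_w': "set w' = insert y (set w)" using w by (auto simp: w'_def)
    have "F - set w' = (F - set w) - {y}" by (auto simp: set_w')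
    then have "card (F - set w') < card (F - set w)"
      using card_Diff1_less[OF finite_Diff[OF less.prems(1)] y] by simp
    moreover have "set w' \<subseteq> F" using set_w' y less.prems(3) by auto
    moreover have "w' \<noteq> []" by (simp add: w'_def)
    moreover have "successively share_vertex w'"
      unfolding w'_def
      by (rule successively_insert_detour) (use less.prems(5) w zy share_vertex_sym in auto)
    moreover have "length w' = 2 * card (set w') - 1"
    proof -
      have "length w' = length w + 2" by (simp add: w w'_def)
      moreover have "card (set w') = card (set w) + 1" using y by (simp add: set_w')
      moreover have "card (set w) \<ge> 1" using less.prems(4) by (simp add: card_gt_0_iff Suc_le_eq)
      ultimately show ?thesis using less.prems(6) by simp
    qed
    ultimately obtain w'' where "hd w'' = hd w'" "set w'' = F" "successively share_vertex w''"
        "length w'' = 2 * card F - 1"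
      using less.hyps[of w'] less.prems(1,2) by blast
    moreover have "hd w' = hd w" by (cases u) (auto simp: w w'_def)
    ultimately show ?thesis by auto
  qed
qed

lemma covering_walk_exists:
  assumes "finite F" "edges_connected F" "x \<in> F"
  shows "\<exists>w. hd w = x \<and> set w = F \<and> successively share_vertex w \<and> length w = 2 * card F - 1"
  using covering_walk_extend[of F "[x]"] assms by simp

definition nbhd :: "edge set \<Rightarrow> edge \<Rightarrow> edge set" where
  "nbhd L e = {e'\<in>L. share_vertex e e'}"

fun walks :: "edge set \<Rightarrow> edge \<Rightarrow> nat \<Rightarrow> edge list set" where
  "walks L e 0 = {[e]}"
| "walks L e (Suc m) = (\<lambda>(w, e'). w @ [e']) ` (SIGMA w:walks L e m. nbhd L (last w))"

lemma walks_finite_card_le: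
  assumes nb: "\<And>e. finite (nbhd L e) \<and> card (nbhd L e) \<le> M"
  shows "finite (walks L e m) \<and> card (walks L e m) \<le> M ^ m"
proof (induction m)
  case 0
  then show ?case by simp
next
  case (Suc m)
  have fin: "finite (SIGMA w:walks L e m. nbhd L (last w))" using Suc nb by auto
  have "card (walks L e (Suc m)) \<le> card (SIGMA w:walks L e m. nbhd L (last w))"
    by (simp add: card_image_le fin)
  also have "\<dots> = (\<Sum>w\<in>walks L e m. card (nbhd L (last w)))"
    using Suc nb by (simp add: card_SigmaI)
  also have "\<dots> \<le> (\<Sum>w\<in>walks L e m. M)" by (rule sum_mono) (use nb in auto)
  also have "\<dots> \<le> M ^ Suc m" using Suc by (simp add: mult.commute)
  finally show ?case using fin by simp
qed

lemma walk_in_walks: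
  "length w = Suc m \<Longrightarrow> hd w = e \<Longrightarrow> set w \<subseteq> L \<Longrightarrow> successively share_vertex w \<Longrightarrow>
    w \<in> walks L e m"
proof (induction m arbitrary: w)
  case 0
  then show ?case by (cases w) auto
next
  case (Suc m)
  obtain u x where w: "w = u @ [x]" using Suc.prems(1) by (cases w rule: rev_cases) auto
  have u: "u \<noteq> []" using Suc.prems(1) by (auto simp: w)
  have "u \<in> walks L e m"
    using Suc.prems u by (intro Suc.IH) (auto simp: w successively_append_iff)
  moreover have "x \<in> nbhd L (last u)"
    using Suc.prems(3,4) u by (auto simp: w nbhd_def successively_append_iff)
  ultimately show ?case by (auto simp: w intro!: image_eqI[of _ _ "(u, x)"])
qed

lemma periodic_bdd_graph_nbhd_bound:
  assumes "periodic_bdd_graph \<Lambda>"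
  obtains M :: nat where "\<And>e. finite (nbhd \<Lambda> e) \<and> card (nbhd \<Lambda> e) \<le> M"
proof -
  define inc where "inc v = {e\<in>\<Lambda>. fst e = v \<or> snd e = v}" for v
  obtain D :: nat where D: "\<And>v. finite (inc v) \<and> card (inc v) \<le> D"
    using assms unfolding periodic_bdd_graph_def inc_def by blast
  have "finite (nbhd \<Lambda> e) \<and> card (nbhd \<Lambda> e) \<le> 2 * D" for e
  proof -
    have sub: "nbhd \<Lambda> e \<subseteq> inc (fst e) \<union> inc (snd e)"
      by (auto simp: nbhd_def inc_def share_vertex_def verts_def)
    have fin: "finite (inc (fst e) \<union> inc (snd e))" using D by simp
    have "card (nbhd \<Lambda> e) \<le> card (inc (fst e) \<union> inc (snd e))" using card_mono[OF fin sub] .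
    also have "\<dots> \<le> card (inc (fst e)) + card (inc (snd e))" by (rule card_Un_le)
    also have "\<dots> \<le> 2 * D" using D[of "fst e"] D[of "snd e"] by simp
    finally show ?thesis using fin sub finite_subset by fastforce
  qed
  then show ?thesis by (rule that)
qed

lemma connected_edge_sets_finite_card_le:
  fixes e :: edge
  assumes nb: "\<And>e. finite (nbhd L e) \<and> card (nbhd L e) \<le> M" and n: "n \<ge> 1"
  defines "A \<equiv> {S. S \<subseteq> L \<and> e \<in> S \<and> finite S \<and> edges_connected S \<and> card S = n}"
  shows "finite A \<and> card A \<le> M ^ (2 * n - 2)"
proof -
  define P where "P S w \<longleftrightarrow> hd w = e \<and> set w = S \<and> successively share_vertex w
       \<and> length w = 2 * card S - 1" for S w
  define walk where "walk S = (SOME w. P S w)" for S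
  have walk: "P S (walk S)" if "S \<in> A" for S
  proof -
    have "\<exists>w. P S w" unfolding P_def using that by (intro covering_walk_exists) (auto simp: A_def)
    then show ?thesis unfolding walk_def by (rule someI_ex)
  qed
  have inj: "inj_on walk A"
  proof (rule inj_onI)
    fix S S' assume "S \<in> A" "S' \<in> A" "walk S = walk S'"
    then show "S = S'" using walk[of S] walk[of S'] by (simp add: P_def)
  qed
  have sub: "walk ` A \<subseteq> walks L e (2 * n - 2)"
  proof
    fix w assume "w \<in> walk ` A"
    then obtain S where S: "S \<in> A" "w = walk S" by auto
    then show "w \<in> walks L e (2 * n - 2)"
      using walk[OF S(1)] n by (intro walk_in_walks) (auto simp: P_def A_def)
  qed
  have fin: "finite (walks L e (2 * n - 2))" using walks_finite_card_le[OF nb] by blast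
  then have "finite A" using inj sub finite_subset finite_imageD by blast
  moreover have "card A \<le> card (walks L e (2 * n - 2))"
    using card_inj_on_le[OF inj sub fin] .
  ultimately show ?thesis using walks_finite_card_le[OF nb] by (meson order_trans)
qed

lemma sum_power_card_le:
  fixes Q :: real and M :: nat and SS :: "'a set set"
  assumes fin: "finite SS" and pos: "\<And>S. S \<in> SS \<Longrightarrow> card S \<ge> 1"
    and count: "\<And>n. n \<ge> 1 \<Longrightarrow> card {S\<in>SS. card S = n} \<le> M ^ (2 * n - 2)"
    and Q: "0 \<le> Q" "real M ^ 2 * Q \<le> 1/2"
  shows "(\<Sum>S\<in>SS. Q ^ card S) \<le> 2 * Q"
proof -
  have pos': "n \<ge> 1" if "n \<in> card ` SS" for n using that pos by auto
  have "(\<Sum>S\<in>SS. Q ^ card S) = (\<Sum>n\<in>card ` SS. \<Sum>S\<in>{S\<in>SS. card S = n}. Q ^ card S)"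
    by (rule sum.group[symmetric]) (use fin in auto)
  also have "\<dots> = (\<Sum>n\<in>card ` SS. real (card {S\<in>SS. card S = n}) * Q ^ n)"
    by (rule sum.cong) auto
  also have "\<dots> \<le> (\<Sum>n\<in>card ` SS. Q * (1/2) ^ (n - 1))"
  proof (rule sum_mono)
    fix n assume "n \<in> card ` SS"
    then have n: "n \<ge> 1" by (rule pos')
    have "real (card {S\<in>SS. card S = n}) * Q ^ n \<le> real M ^ (2 * n - 2) * Q ^ n"
      using count[OF n] Q by (intro mult_right_mono) (auto simp flip: of_nat_power)
    also have "\<dots> = Q * (real M ^ 2 * Q) ^ (n - 1)"
      using n by (cases n) (auto simp: power_mult power_mult_distrib)
    also have "\<dots> \<le> Q * (1/2) ^ (n - 1)"
      using Q by (intro mult_left_mono power_mono) auto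
    finally show "real (card {S\<in>SS. card S = n}) * Q ^ n \<le> Q * (1/2) ^ (n - 1)" .
  qed
  also have "\<dots> = Q * (\<Sum>m\<in>(\<lambda>n. n - 1) ` card ` SS. (1/2) ^ m)"
  proof -
    have "inj_on (\<lambda>n. n - 1) (card ` SS)"
      using pos' by (intro inj_onI) (metis One_nat_def Suc_pred less_eq_Suc_le)
    then show ?thesis by (simp add: sum_distrib_left sum.reindex)
  qed
  also have "\<dots> \<le> Q * (\<Sum>m. (1/2) ^ m)"
    using Q fin by (intro mult_left_mono sum_le_suminf) auto
  also have "\<dots> = 2 * Q" using suminf_geometric[of "1/2::real"] by simp
  finally show ?thesis .
qed

lemma sum_power_card_connected_le:
  fixes Q :: real
  assumes nb: "\<And>e. finite (nbhd L e) \<and> card (nbhd L e) \<le> M"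
    and Q: "0 \<le> Q" "real M ^ 2 * Q \<le> 1/2"
    and fin: "finite SS"
    and SS: "\<And>S. S \<in> SS \<Longrightarrow> finite S \<and> S \<subseteq> L \<and> e \<in> S \<and> edges_connected S"
  shows "(\<Sum>S\<in>SS. Q ^ card S) \<le> 2 * Q"
proof (rule sum_power_card_le[OF fin _ _ Q])
  show "card S \<ge> 1" if "S \<in> SS" for S
    using SS[OF that] by (auto simp: Suc_le_eq card_gt_0_iff)
  fix n :: nat assume n: "n \<ge> 1"
  have "{S\<in>SS. card S = n} \<subseteq> {S. S \<subseteq> L \<and> e \<in> S \<and> finite S \<and> edges_connected S \<and> card S = n}"
    using SS by auto
  then show "card {S\<in>SS. card S = n} \<le> M ^ (2 * n - 2)"
    using connected_edge_sets_finite_card_le[OF nb n] by (meson card_mono order_trans)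
qed

section \<open>Exponential sums over a lattice\<close>

lemma independent3_coeffs_norm_ge:
  fixes b1 b2 b3 :: "'a::euclidean_space"
  assumes card: "card {b1, b2, b3} = 3" and ind: "independent {b1, b2, b3}"
  obtains \<delta> where "\<delta> > 0" "\<And>x y z. \<delta> * (\<bar>x\<bar> + \<bar>y\<bar> + \<bar>z\<bar>) \<le> norm (x *\<^sub>R b1 + y *\<^sub>R b2 + z *\<^sub>R b3)"
proof -
  have distinct: "b1 \<noteq> b2" "b1 \<noteq> b3" "b2 \<noteq> b3"
    using card by (auto simp: card_insert_if split: if_splits)
  define L where "L v = v$1 *\<^sub>R b1 + v$2 *\<^sub>R b2 + v$3 *\<^sub>R b3" for v :: "real^3"
  have lin: "linear L" unfolding L_def
    by (intro linearI) (auto simp: algebra_simps scaleR_add_left)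
  have "v = 0" if "L v = 0" for v
  proof -
    define c where "c u = (if u = b1 then v$1 else if u = b2 then v$2 else v$3)" for u
    have "(\<Sum>u\<in>{b1, b2, b3}. c u *\<^sub>R u) = L v"
      using distinct by (simp add: c_def L_def)
    then have "\<forall>u\<in>{b1, b2, b3}. c u = 0" using ind that unfolding independent_explicit by auto
    then show ?thesis using distinct by (auto simp: c_def vec_eq_iff forall_3)
  qed
  then have "inj L" using linear_inj_iff_eq_0[OF lin] by blast
  then obtain B where B: "B > 0" "\<And>v. B * norm v \<le> norm (L v)"
    using linear_inj_bounded_below_pos[OF lin] by blast
  show ?thesis
  proof
    show "B / 3 > 0" using B by simp
    fix x y z :: real
    define v :: "real^3" where "v = vector [x, y, z]"
    have "\<bar>x\<bar> + \<bar>y\<bar> + \<bar>z\<bar> \<le> 3 * norm v"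
      using component_le_norm_cart[of v 1] component_le_norm_cart[of v 2]
        component_le_norm_cart[of v 3]
      by (simp add: v_def vector_3)
    then have "B / 3 * (\<bar>x\<bar> + \<bar>y\<bar> + \<bar>z\<bar>) \<le> B * norm v" using B by simp
    also have "\<dots> \<le> norm (L v)" by (rule B)
    finally show "B / 3 * (\<bar>x\<bar> + \<bar>y\<bar> + \<bar>z\<bar>) \<le> norm (x *\<^sub>R b1 + y *\<^sub>R b2 + z *\<^sub>R b3)"
      by (simp add: L_def v_def vector_3)
  qed
qed

lemma sum_power_nat_abs_le:
  fixes r :: real
  assumes r: "0 \<le> r" "r < 1" and fin: "finite A"
  shows "(\<Sum>i\<in>A. r ^ nat \<bar>i\<bar>) \<le> 2 / (1 - r)"
proof -
  have half: "(\<Sum>i\<in>B. r ^ nat \<bar>i\<bar>) \<le> 1 / (1 - r)"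
    if "finite B" "inj_on (\<lambda>i. nat \<bar>i\<bar>) B" for B :: "int set"
  proof -
    have "(\<Sum>i\<in>B. r ^ nat \<bar>i\<bar>) = (\<Sum>n\<in>(\<lambda>i. nat \<bar>i\<bar>) ` B. r ^ n)"
      using sum.reindex[OF that(2), of "\<lambda>n. r ^ n"] by simp
    also have "\<dots> \<le> (\<Sum>n. r ^ n)"
      using r that(1) by (intro sum_le_suminf summable_geometric) auto
    also have "\<dots> = 1 / (1 - r)" using suminf_geometric[of r] r by simp
    finally show ?thesis .
  qed
  have "(\<Sum>i\<in>A. r ^ nat \<bar>i\<bar>) = (\<Sum>i\<in>A \<inter> {0..}. r ^ nat \<bar>i\<bar>) + (\<Sum>i\<in>A - {0..}. r ^ nat \<bar>i\<bar>)"
    using fin by (rule sum.Int_Diff)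
  also have "\<dots> \<le> 1 / (1 - r) + 1 / (1 - r)"
    using fin by (intro add_mono half) (auto simp: inj_on_def)
  finally show ?thesis by simp
qed

lemma sum_power_nat_abs3_le:
  fixes r :: real
  assumes r: "0 \<le> r" "r < 1" and fin: "finite (U :: (int \<times> int \<times> int) set)"
  shows "(\<Sum>(i, j, k)\<in>U. r ^ (nat \<bar>i\<bar> + nat \<bar>j\<bar> + nat \<bar>k\<bar>)) \<le> (2 / (1 - r)) ^ 3"
proof -
  define A where "A = fst ` U \<union> fst ` snd ` U \<union> snd ` snd ` U"
  define g where "g i = r ^ nat \<bar>i\<bar>" for i :: int
  have "finite A" using fin by (simp add: A_def)
  have "(\<Sum>(i, j, k)\<in>U. r ^ (nat \<bar>i\<bar> + nat \<bar>j\<bar> + nat \<bar>k\<bar>)) \<le> (\<Sum>(i, j, k)\<in>A \<times> A \<times> A. g i * g j * g k)"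
    unfolding g_def power_add
    by (rule sum_mono2) (use \<open>finite A\<close> r in \<open>auto simp: A_def, force+\<close>)
  also have "\<dots> = (\<Sum>i\<in>A. g i * (\<Sum>j\<in>A. g j * (\<Sum>k\<in>A. g k)))"
    by (simp add: sum.cartesian_product[symmetric] sum_distrib_left mult.assoc)
  also have "\<dots> = sum g A ^ 3"
    by (simp add: sum_distrib_left[symmetric] sum_distrib_right[symmetric] power3_eq_cube)
  also have "\<dots> \<le> (2 / (1 - r)) ^ 3"
    unfolding g_def using r \<open>finite A\<close>
    by (intro power_mono sum_power_nat_abs_le sum_nonneg) auto
  finally show ?thesis .
qed

lemma exp_sum_lattice_le:
  fixes h :: "int \<times> int \<times> int \<Rightarrow> 'a::real_normed_vector"
  assumes \<delta>: "\<delta> > 0" and h0: "h (0, 0, 0) = 0"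
    and h: "\<And>i j k. \<delta> * (\<bar>i\<bar> + \<bar>j\<bar> + \<bar>k\<bar>) \<le> norm (h (i, j, k))"
    and b: "1 \<le> b" and T: "finite T" "T \<subseteq> range h - {0}"
  shows "(\<Sum>\<gamma>\<in>T. exp (- b * norm \<gamma>)) \<le> exp (- (b - 1) * \<delta>) * (2 / (1 - exp (- \<delta>))) ^ 3"
proof -
  define \<rho> where "\<rho> = exp (- \<delta>)"
  define s where "s = (\<lambda>(i::int, j::int, k::int). nat \<bar>i\<bar> + nat \<bar>j\<bar> + nat \<bar>k\<bar>)"
  obtain U where U: "finite U" "T = h ` U"
    using finite_subset_image[OF T(1)] T(2) by blast
  have summand: "exp (- b * norm (h u)) \<le> exp (- (b - 1) * \<delta>) * \<rho> ^ s u" if "h u \<noteq> 0" for u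
  proof -
    obtain i j k where u: "u = (i, j, k)" by (cases u)
    have norm_h: "\<delta> * real (s u) \<le> norm (h u)" using h[of i j k] by (simp add: u s_def)
    have "s u \<ge> 1" using that h0 by (cases "i = 0"; cases "j = 0"; cases "k = 0") (auto simp: u s_def)
    then have "\<delta> \<le> \<delta> * real (s u)" using \<delta> by simp
    then have "(b - 1) * \<delta> + \<delta> * real (s u) \<le> (b - 1) * (\<delta> * real (s u)) + \<delta> * real (s u)"
      using b by (simp add: mult_left_mono)
    also have "\<dots> = b * (\<delta> * real (s u))" by (simp add: algebra_simps)
    also have "\<dots> \<le> b * norm (h u)" using norm_h b by (simp add: mult_left_mono)
    finally have "- b * norm (h u) \<le> - (b - 1) * \<delta> + - \<delta> * real (s u)" by linarith
    then show ?thesis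
      by (simp add: \<rho>_def exp_add[symmetric] exp_of_nat_mult[symmetric] mult.commute)
  qed
  have "(\<Sum>\<gamma>\<in>T. exp (- b * norm \<gamma>)) \<le> (\<Sum>u\<in>U. exp (- b * norm (h u)))"
    using sum_image_le[OF U(1), of "\<lambda>\<gamma>. exp (- b * norm \<gamma>)" h] by (simp add: U(2) comp_def)
  also have "\<dots> \<le> (\<Sum>u\<in>U. exp (- (b - 1) * \<delta>) * \<rho> ^ s u)"
    using T(2) by (intro sum_mono summand) (auto simp: U(2))
  also have "\<dots> = exp (- (b - 1) * \<delta>) * (\<Sum>(i, j, k)\<in>U. \<rho> ^ (nat \<bar>i\<bar> + nat \<bar>j\<bar> + nat \<bar>k\<bar>))"
    by (simp add: sum_distrib_left s_def case_prod_beta)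
  also have "\<dots> \<le> exp (- (b - 1) * \<delta>) * (2 / (1 - \<rho>)) ^ 3"
    using \<delta> U(1) by (intro mult_left_mono sum_power_nat_abs3_le) (auto simp: \<rho>_def)
  finally show ?thesis by (simp add: \<rho>_def)
qed

lemma eta_le_norm: "\<gamma> \<in> \<Gamma> - {0} \<Longrightarrow> eta \<Gamma> \<le> norm \<gamma>"
  unfolding eta_def by (rule cInf_lower) (auto intro: bdd_belowI[of _ 0])

lemma le_eta: "\<Gamma> - {0} \<noteq> {} \<Longrightarrow> (\<And>\<gamma>. \<gamma> \<in> \<Gamma> - {0} \<Longrightarrow> \<delta> \<le> norm \<gamma>) \<Longrightarrow> \<delta> \<le> eta \<Gamma>"
  unfolding eta_def by (rule cInf_greatest) auto

lemma rank3_lattice_bounds: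
  assumes "rank3_lattice \<Gamma>"
  obtains \<delta> S0 where "\<delta> > 0" "S0 \<ge> 0" "\<delta> \<le> eta \<Gamma>"
    "\<And>b T. 1 \<le> b \<Longrightarrow> finite T \<Longrightarrow> T \<subseteq> \<Gamma> - {0} \<Longrightarrow>
        (\<Sum>\<gamma>\<in>T. exp (- b * norm \<gamma>)) \<le> exp (- (b - 1) * \<delta>) * S0"
proof -
  obtain b1 b2 b3 where card: "card {b1, b2, b3} = 3" and ind: "independent {b1, b2, b3}"
    and \<Gamma>: "\<Gamma> = {of_int i *\<^sub>R b1 + of_int j *\<^sub>R b2 + of_int k *\<^sub>R b3 | i j k. True}"
    using assms unfolding rank3_lattice_def by blast
  obtain \<delta> where \<delta>: "\<delta> > 0"
    and coeffs: "\<And>x y z. \<delta> * (\<bar>x\<bar> + \<bar>y\<bar> + \<bar>z\<bar>) \<le> norm (x *\<^sub>R b1 + y *\<^sub>R b2 + z *\<^sub>R b3)"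
    using independent3_coeffs_norm_ge[OF card ind] by blast
  define h where "h = (\<lambda>(i::int, j::int, k::int). of_int i *\<^sub>R b1 + of_int j *\<^sub>R b2 + of_int k *\<^sub>R b3)"
  have \<Gamma>_h: "\<Gamma> = range h"
  proof (intro set_eqI iffI)
    fix v assume "v \<in> \<Gamma>"
    then obtain i j k where "v = of_int i *\<^sub>R b1 + of_int j *\<^sub>R b2 + of_int k *\<^sub>R b3"
      using \<Gamma> by auto
    then show "v \<in> range h" by (intro image_eqI[of _ _ "(i, j, k)"]) (simp_all add: h_def)
  qed (auto simp: \<Gamma> h_def)
  have h0: "h (0, 0, 0) = 0" by (simp add: h_def)
  have h: "\<delta> * (\<bar>i\<bar> + \<bar>j\<bar> + \<bar>k\<bar>) \<le> norm (h (i, j, k))" for i j k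
    using coeffs[of i j k] by (simp add: h_def)
  have "h (1, 0, 0) \<noteq> 0"
  proof
    assume "h (1, 0, 0) = 0"
    then have "b1 = 0" by (simp add: h_def)
    then have "dependent {b1, b2, b3}" by (intro dependent_zero) simp
    then show False using ind by simp
  qed
  then have "\<Gamma> - {0} \<noteq> {}" using \<Gamma>_h by auto
  moreover have "\<delta> \<le> norm \<gamma>" if \<gamma>_nz: "\<gamma> \<in> \<Gamma> - {0}" for \<gamma>
  proof -
    obtain u where "\<gamma> = h u" using \<gamma>_nz \<Gamma>_h by blast
    then obtain i j k where \<gamma>: "\<gamma> = h (i, j, k)" by (cases u) blast
    then have "\<bar>i\<bar> + \<bar>j\<bar> + \<bar>k\<bar> \<ge> 1" using \<gamma>_nz h0 by (cases "i = 0 \<and> j = 0 \<and> k = 0") auto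
    then have "\<delta> \<le> \<delta> * (\<bar>i\<bar> + \<bar>j\<bar> + \<bar>k\<bar>)" using \<delta> by simp
    then show ?thesis using h[of i j k] \<gamma> by simp
  qed
  ultimately have "\<delta> \<le> eta \<Gamma>" by (rule le_eta)
  moreover have "(2 / (1 - exp (- \<delta>))) ^ 3 \<ge> 0" using \<delta> by simp
  ultimately show ?thesis
    using that[OF \<delta>] exp_sum_lattice_le[OF \<delta> h0 h] \<Gamma>_h by blast
qed

section \<open>Sums over currents\<close>

lemma finite_supp: "finite E \<Longrightarrow> finite (supp E J)"
  by (simp add: supp_def)

lemma norm1_eq_sum_supp: "finite E \<Longrightarrow> norm1 E J = (\<Sum>e\<in>supp E J. norm (J e))"
  unfolding norm1_def supp_def by (intro sum.mono_neutral_right) auto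

lemma eta_card_supp_le_size:
  assumes E: "finite E" and J: "J \<in> currents \<Gamma> E"
  shows "eta \<Gamma> * real (card (supp E J)) \<le> size \<Lambda> E J"
proof -
  have "eta \<Gamma> * real (card (supp E J)) = (\<Sum>e\<in>supp E J. eta \<Gamma>)" by simp
  also have "\<dots> \<le> (\<Sum>e\<in>supp E J. norm (J e))"
    using J by (intro sum_mono eta_le_norm) (auto simp: supp_def currents_def)
  also have "\<dots> = norm1 E J" by (simp add: norm1_eq_sum_supp[OF E])
  also have "\<dots> \<le> size \<Lambda> E J" by (simp add: size_def)
  finally show ?thesis .
qed

lemma exp_neg_size_le_prod:
  assumes "finite E" "0 \<le> b"
  shows "exp (- b * size \<Lambda> E J) \<le> (\<Prod>e\<in>supp E J. exp (- b * norm (J e)))"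
proof -
  have "exp (- b * size \<Lambda> E J) \<le> exp (- b * norm1 E J)"
    using assms(2) by (simp add: size_def mult_left_mono)
  also have "\<dots> = (\<Prod>e\<in>supp E J. exp (- b * norm (J e)))"
    by (simp add: norm1_eq_sum_supp[OF assms(1)] sum_distrib_left exp_sum[OF finite_supp[OF assms(1)]])
  finally show ?thesis .
qed

lemma currents_inj_on_restrict_supp:
  "inj_on (\<lambda>J. restrict J S) {J \<in> currents \<Gamma> E. supp E J = S}"
proof (rule inj_onI, rule ext)
  fix J J' e
  assume J: "J \<in> {J \<in> currents \<Gamma> E. supp E J = S}" and J': "J' \<in> {J \<in> currents \<Gamma> E. supp E J = S}"
    and eq: "restrict J S = restrict J' S"
  have vanish: "H e = 0" if "H \<in> currents \<Gamma> E" "supp E H = S" "e \<notin> S" for H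
  proof (cases "e \<in> E")
    case True
    then show ?thesis using that(2,3) by (auto simp: supp_def)
  next
    case False
    then show ?thesis using that(1) unfolding currents_def by blast
  qed
  show "J e = J' e"
    using vanish[of J] vanish[of J'] J J' fun_cong[OF eq, of e] by (cases "e \<in> S") auto
qed

lemma sum_prod_le_power_card:
  fixes g :: "'b \<Rightarrow> real" and K :: "('a \<Rightarrow> 'b) set"
  assumes S: "finite S" and K: "finite K" and range: "\<And>J e. J \<in> K \<Longrightarrow> e \<in> S \<Longrightarrow> J e \<in> G"
    and inj: "inj_on (\<lambda>J. restrict J S) K"
    and g: "\<And>y. g y \<ge> 0" "\<And>T. finite T \<Longrightarrow> T \<subseteq> G \<Longrightarrow> sum g T \<le> Q"
  shows "(\<Sum>J\<in>K. \<Prod>e\<in>S. g (J e)) \<le> Q ^ card S"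
proof -
  define P where "P = (\<lambda>J. restrict J S) ` K"
  have "finite P" using K by (simp add: P_def)
  have "(\<Sum>J\<in>K. \<Prod>e\<in>S. g (J e)) = (\<Sum>p\<in>P. \<Prod>e\<in>S. g (p e))"
    unfolding P_def by (subst sum.reindex[OF inj]) (auto intro!: sum.cong prod.cong)
  also have "\<dots> \<le> (\<Sum>p\<in>(\<Pi>\<^sub>E e\<in>S. (\<lambda>p. p e) ` P). \<Prod>e\<in>S. g (p e))"
    using S \<open>finite P\<close> g(1)
    by (intro sum_mono2 finite_PiE prod_nonneg) (auto simp: P_def PiE_iff)
  also have "\<dots> = (\<Prod>e\<in>S. \<Sum>y\<in>(\<lambda>p. p e) ` P. g y)"
    by (rule prod_sum_PiE[symmetric]) (use S \<open>finite P\<close> in auto)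
  also have "\<dots> \<le> (\<Prod>e\<in>S. Q)"
  proof (rule prod_mono)
    fix e assume "e \<in> S"
    then have "(\<lambda>p. p e) ` P \<subseteq> G" using range by (auto simp: P_def)
    then show "0 \<le> (\<Sum>y\<in>(\<lambda>p. p e) ` P. g y) \<and> (\<Sum>y\<in>(\<lambda>p. p e) ` P. g y) \<le> Q"
      using g \<open>finite P\<close> by (auto intro: sum_nonneg)
  qed
  finally show ?thesis by simp
qed

lemma sum_exp_size_le:
  fixes b Q :: real and M :: nat
  assumes lattice_sum: "\<And>T. finite T \<Longrightarrow> T \<subseteq> \<Gamma> - {0} \<Longrightarrow> (\<Sum>\<gamma>\<in>T. exp (- b * norm \<gamma>)) \<le> Q"
    and nb: "\<And>e. finite (nbhd \<Lambda> e) \<and> card (nbhd \<Lambda> e) \<le> M"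
    and Q: "real M ^ 2 * Q \<le> 1/2" and b: "0 \<le> b"
    and E: "finite E" "E \<subseteq> \<Lambda>"
    and JJ: "finite JJ" "JJ \<subseteq> {J \<in> Jset \<Gamma> E. oe \<in> supp E J}"
  shows "(\<Sum>J\<in>JJ. exp (- b * size \<Lambda> E J)) \<le> 2 * Q"
proof -
  define g where "g \<gamma> = exp (- b * norm \<gamma>)" for \<gamma> :: pt
  have "Q \<ge> 0" using lattice_sum[of "{}"] by simp
  have cur: "J \<in> currents \<Gamma> E" if "J \<in> JJ" for J using JJ(2) that by (auto simp: Jset_def)
  have "(\<Sum>J\<in>JJ. exp (- b * size \<Lambda> E J)) \<le> (\<Sum>J\<in>JJ. \<Prod>e\<in>supp E J. g (J e))"
    unfolding g_def using E(1) b by (intro sum_mono exp_neg_size_le_prod)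
  also have "\<dots> = (\<Sum>S\<in>supp E ` JJ. \<Sum>J\<in>{J\<in>JJ. supp E J = S}. \<Prod>e\<in>supp E J. g (J e))"
    by (rule sum.group[symmetric]) (use JJ(1) in auto)
  also have "\<dots> = (\<Sum>S\<in>supp E ` JJ. \<Sum>J\<in>{J\<in>JJ. supp E J = S}. \<Prod>e\<in>S. g (J e))"
    by (intro sum.cong refl) auto
  also have "\<dots> \<le> (\<Sum>S\<in>supp E ` JJ. Q ^ card S)"
  proof (intro sum_mono sum_prod_le_power_card[where G = "\<Gamma> - {0}"])
    fix S assume "S \<in> supp E ` JJ"
    then show "finite S" using E(1) finite_supp by auto
    show "inj_on (\<lambda>J. restrict J S) {J\<in>JJ. supp E J = S}"
      by (rule inj_on_subset[OF currents_inj_on_restrict_supp]) (auto intro: cur)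
    show "J e \<in> \<Gamma> - {0}" if "J \<in> {J\<in>JJ. supp E J = S}" "e \<in> S" for J e
      using that cur[of J] by (auto simp: supp_def currents_def)
  qed (use JJ(1) lattice_sum in \<open>auto simp: g_def\<close>)
  also have "\<dots> \<le> 2 * Q"
  proof (rule sum_power_card_connected_le[OF nb \<open>Q \<ge> 0\<close> Q])
    show "finite (supp E ` JJ)" using JJ(1) by simp
    fix S assume "S \<in> supp E ` JJ"
    then show "finite S \<and> S \<subseteq> \<Lambda> \<and> oe \<in> S \<and> edges_connected S"
      using JJ(2) E finite_supp[OF E(1)] by (auto simp: Jset_def supp_def)
  qed
  finally show ?thesis .
qed

lemma summable_on_infsum_le:
  fixes f :: "'a \<Rightarrow> real"
  assumes "\<And>x. x \<in> A \<Longrightarrow> 0 \<le> f x" and "\<And>F. finite F \<Longrightarrow> F \<subseteq> A \<Longrightarrow> sum f F \<le> c"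
  shows "f summable_on A \<and> infsum f A \<le> c"
proof -
  have "f summable_on A"
    using assms by (intro nonneg_bdd_above_summable_on bdd_aboveI[of _ c]) auto
  then show ?thesis using assms(2) infsum_le_finite_sums by blast
qed

lemma sum_incompat_le:
  fixes w :: "(edge \<Rightarrow> pt) \<Rightarrow> real" and M :: nat
  assumes nb: "\<And>e. finite (nbhd \<Lambda> e) \<and> card (nbhd \<Lambda> e) \<le> M"
    and E: "finite E" "E \<subseteq> \<Lambda>" and Jt: "finite Jt"
    and w: "\<And>J. 0 \<le> w J" "\<And>e. (\<Sum>J\<in>{J\<in>Jt. e \<in> supp E J}. w J) \<le> 1"
  shows "(\<Sum>J\<in>Jt. if incompat E I J then w J else 0) \<le> real M * real (card (supp E I))"
proof -
  define X where "X = (\<Union>e\<in>supp E I. nbhd \<Lambda> e)"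
  have "finite X" using nb finite_supp[OF E(1)] by (simp add: X_def)
  have "card X \<le> (\<Sum>e\<in>supp E I. card (nbhd \<Lambda> e))"
    unfolding X_def by (rule card_UN_le[OF finite_supp[OF E(1)]])
  also have "\<dots> \<le> (\<Sum>e\<in>supp E I. M)" by (rule sum_mono) (use nb in auto)
  finally have card_X: "card X \<le> M * card (supp E I)" by (simp add: mult.commute)
  have "(\<Sum>J\<in>Jt. if incompat E I J then w J else 0) \<le> (\<Sum>J\<in>Jt. \<Sum>e\<in>X. if e \<in> supp E J then w J else 0)"
  proof (intro sum_mono)
    fix J
    show "(if incompat E I J then w J else 0) \<le> (\<Sum>e\<in>X. if e \<in> supp E J then w J else 0)"
    proof (cases "incompat E I J")
      case True
      then obtain e where e: "e \<in> X" "e \<in> supp E J"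
        using E(2) unfolding incompat_def X_def nbhd_def supp_def by blast
      then have "w J = (if e \<in> supp E J then w J else 0)" by simp
      also have "\<dots> \<le> (\<Sum>e\<in>X. if e \<in> supp E J then w J else 0)"
        by (rule member_le_sum) (use e \<open>finite X\<close> w(1) in auto)
      finally show ?thesis using True by simp
    qed (simp add: w(1) sum_nonneg)
  qed
  also have "\<dots> = (\<Sum>e\<in>X. \<Sum>J\<in>Jt. if e \<in> supp E J then w J else 0)"
    by (rule sum.swap)
  also have "\<dots> = (\<Sum>e\<in>X. \<Sum>J\<in>{J\<in>Jt. e \<in> supp E J}. w J)"
    by (simp add: sum.inter_filter Jt)
  also have "\<dots> \<le> real (card X)" using sum_mono[of X _ "\<lambda>_. 1", OF w(2)] by simp
  also have "\<dots> \<le> real M * real (card (supp E I))" using card_X by (simp flip: of_nat_mult)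
  finally show ?thesis .
qed

lemma eventually_le_mult_at_top:
  fixes a c :: real
  assumes "c > 0"
  shows "\<forall>\<^sub>F \<beta> in at_top. a \<le> \<beta> * c"
  using eventually_ge_at_top[of "a / c"] by eventually_elim (use assms in \<open>simp add: field_simps\<close>)

lemma eventually_mult_exp_le_1:
  fixes A c :: real
  assumes "c > 0"
  shows "\<forall>\<^sub>F \<beta> in at_top. A * exp (- \<beta> * c) \<le> 1"
  using eventually_le_mult_at_top[OF assms, of "ln (max A 1)"]
proof eventually_elim
  case (elim \<beta>)
  then have "max A 1 \<le> exp (\<beta> * c)" by (metis exp_le_cancel_iff exp_ln max.strict_coboundedI2 zero_less_one)
  then show ?case by (simp add: exp_minus field_simps)
qed

lemma exp_decay_bounds:
  fixes b \<delta> S0 x :: real and M :: nat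
  assumes S0: "0 \<le> S0" and b: "0 \<le> b * \<delta>" and x: "x = exp (- b * \<delta> / 2)"
    and small: "2 * (real M ^ 2 + 1) * exp \<delta> * S0 * x \<le> 1"
  shows "2 * (exp (- (b - 1) * \<delta>) * S0) \<le> x" and "real M ^ 2 * (exp (- (b - 1) * \<delta>) * S0) \<le> 1 / 2"
proof -
  define y where "y = exp \<delta> * S0 * x"
  have Q: "exp (- (b - 1) * \<delta>) * S0 = y * x"
    by (simp add: y_def x mult_exp_exp algebra_simps)
  have "0 \<le> x" "x \<le> 1" using b by (simp_all add: x)
  have "0 \<le> y" using S0 \<open>0 \<le> x\<close> by (simp add: y_def)
  have y: "2 * y + 2 * (real M ^ 2 * y) \<le> 1" using small by (simp add: y_def algebra_simps)
  have "0 \<le> real M ^ 2 * y" using \<open>0 \<le> y\<close> by simp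
  have "2 * (y * x) \<le> 1 * x" using y \<open>0 \<le> x\<close> \<open>0 \<le> real M ^ 2 * y\<close>
    by (intro mult_right_mono[of "2 * y" 1 x, simplified mult.assoc]) auto
  then show "2 * (exp (- (b - 1) * \<delta>) * S0) \<le> x" unfolding Q by simp
  have "2 * (real M ^ 2 * y) * x \<le> 1 * 1" using y \<open>0 \<le> x\<close> \<open>x \<le> 1\<close> \<open>0 \<le> y\<close>
    by (intro mult_mono) auto
  then show "real M ^ 2 * (exp (- (b - 1) * \<delta>) * S0) \<le> 1 / 2" unfolding Q by (simp add: mult.assoc)
qed

lemma eventually_sum_exp_size_le:
  fixes \<delta> S0 c6 :: real and M :: nat
  assumes \<delta>: "\<delta> > 0" and S0: "S0 \<ge> 0" and c6: "c6 > 0"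
    and lattice_sum: "\<And>b T. 1 \<le> b \<Longrightarrow> finite T \<Longrightarrow> T \<subseteq> \<Gamma> - {0} \<Longrightarrow>
        (\<Sum>\<gamma>\<in>T. exp (- b * norm \<gamma>)) \<le> exp (- (b - 1) * \<delta>) * S0"
    and nb: "\<And>e. finite (nbhd \<Lambda> e) \<and> card (nbhd \<Lambda> e) \<le> M"
  shows "\<forall>\<^sub>F \<beta> in at_top. \<forall>E JJ oe. finite E \<longrightarrow> E \<subseteq> \<Lambda> \<longrightarrow> finite JJ \<longrightarrow>
    JJ \<subseteq> {J \<in> Jset \<Gamma> E. oe \<in> supp E J} \<longrightarrow>
    (\<Sum>J\<in>JJ. exp (- \<beta> * c6 * size \<Lambda> E J)) \<le> exp (- \<beta> * (c6 * \<delta> / 2))"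
proof -
  have "\<forall>\<^sub>F \<beta> in at_top. 1 \<le> \<beta> * c6 \<and> 2 * (real M ^ 2 + 1) * exp \<delta> * S0 * exp (- \<beta> * (c6 * \<delta> / 2)) \<le> 1"
    using c6 \<delta> by (intro eventually_conj eventually_le_mult_at_top eventually_mult_exp_le_1) auto
  then show ?thesis
  proof eventually_elim
    case (elim \<beta>)
    define b where "b = \<beta> * c6"
    have b: "1 \<le> b" and small: "2 * (real M ^ 2 + 1) * exp \<delta> * S0 * exp (- b * \<delta> / 2) \<le> 1"
      using elim by (simp_all add: b_def mult.assoc)
    have "exp (- b * \<delta> / 2) = exp (- \<beta> * (c6 * \<delta> / 2))" by (simp add: b_def)
    note Q = exp_decay_bounds[OF S0 _ refl small, unfolded this]
    show ?case
    proof (intro allI impI)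
      fix E JJ oe assume E_JJ: "finite E" "E \<subseteq> \<Lambda>" "finite JJ" "JJ \<subseteq> {J \<in> Jset \<Gamma> E. oe \<in> supp E J}"
      have "(\<Sum>J\<in>JJ. exp (- b * size \<Lambda> E J)) \<le> 2 * (exp (- (b - 1) * \<delta>) * S0)"
        using b \<delta> Q(2) by (intro sum_exp_size_le[OF lattice_sum[OF b] nb _ _ E_JJ]) auto
      also have "\<dots> \<le> exp (- \<beta> * (c6 * \<delta> / 2))" using b \<delta> Q(1) by simp
      finally show "(\<Sum>J\<in>JJ. exp (- \<beta> * c6 * size \<Lambda> E J)) \<le> exp (- \<beta> * (c6 * \<delta> / 2))"
        by (simp add: b_def)
    qed
  qed
qed

lemma activity_le_exp_size:
  fixes \<beta> c4 c5 :: real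
  assumes "finite E" "J \<in> Jset \<Gamma> E" "0 \<le> \<beta> * c5"
  shows "exp (- \<beta> * c4 * size \<Lambda> E J) * exp (\<beta> * c5 * eta \<Gamma> * real (card (supp E J)))
    \<le> exp (- \<beta> * (c4 - c5) * size \<Lambda> E J)"
proof -
  have "\<beta> * c5 * (eta \<Gamma> * real (card (supp E J))) \<le> \<beta> * c5 * size \<Lambda> E J"
    using assms eta_card_supp_le_size[of E J \<Gamma> \<Lambda>] by (intro mult_left_mono) (auto simp: Jset_def)
  then show ?thesis by (simp add: algebra_simps flip: exp_add)
qed

lemma cluster_estimates:
  fixes \<beta> c4 c5 c6 x :: real and M :: nat
  assumes c6: "c6 = c4 - c5"
    and fin: "\<And>E JJ oe. finite E \<Longrightarrow> E \<subseteq> \<Lambda> \<Longrightarrow> finite JJ \<Longrightarrow> JJ \<subseteq> {J \<in> Jset \<Gamma> E. oe \<in> supp E J} \<Longrightarrow>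
        (\<Sum>J\<in>JJ. exp (- \<beta> * c6 * size \<Lambda> E J)) \<le> x"
    and nb: "\<And>e. finite (nbhd \<Lambda> e) \<and> card (nbhd \<Lambda> e) \<le> M"
    and x: "x \<le> 1" and \<beta>: "0 \<le> \<beta> * c5" "real M \<le> \<beta> * c5 * eta \<Gamma>"
  shows "(\<forall>E oe. finite E \<longrightarrow> E \<subseteq> \<Lambda> \<longrightarrow> oe \<in> E \<longrightarrow>
        (\<lambda>J. exp (- \<beta> * c6 * size \<Lambda> E J)) summable_on {J \<in> Jset \<Gamma> E. oe \<in> supp E J} \<and>
        (\<Sum>\<^sub>\<infinity>J\<in>{J \<in> Jset \<Gamma> E. oe \<in> supp E J}. exp (- \<beta> * c6 * size \<Lambda> E J)) \<le> x) \<and>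
    (\<forall>E Jt oe. finite E \<longrightarrow> E \<subseteq> \<Lambda> \<longrightarrow> finite Jt \<longrightarrow> Jt \<subseteq> Jset \<Gamma> E \<longrightarrow> oe \<in> E \<longrightarrow>
        (\<Sum>J\<in>{J\<in>Jt. oe \<in> supp E J}.
            exp (- \<beta> * c4 * size \<Lambda> E J) * exp (\<beta> * c5 * eta \<Gamma> * real (card (supp E J)))) \<le> x) \<and>
    (\<forall>E Jt I. finite E \<longrightarrow> E \<subseteq> \<Lambda> \<longrightarrow> finite Jt \<longrightarrow> Jt \<subseteq> Jset \<Gamma> E \<longrightarrow> I \<in> Jt \<longrightarrow>
        (\<Sum>J\<in>Jt. exp (- \<beta> * c4 * size \<Lambda> E J) * (if incompat E I J then 1 else 0)
                    * exp (\<beta> * c5 * eta \<Gamma> * real (card (supp E J))))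
          \<le> \<beta> * c5 * eta \<Gamma> * real (card (supp E I)))"
proof -
  define w where "w E J = exp (- \<beta> * c4 * size \<Lambda> E J) * exp (\<beta> * c5 * eta \<Gamma> * real (card (supp E J)))"
    for E J
  have local_sum: "(\<Sum>J\<in>{J\<in>Jt. oe \<in> supp E J}. w E J) \<le> x"
    if E: "finite E" "E \<subseteq> \<Lambda>" and Jt: "finite Jt" "Jt \<subseteq> Jset \<Gamma> E" for E Jt oe
  proof -
    have "(\<Sum>J\<in>{J\<in>Jt. oe \<in> supp E J}. w E J) \<le> (\<Sum>J\<in>{J\<in>Jt. oe \<in> supp E J}. exp (- \<beta> * c6 * size \<Lambda> E J))"
      unfolding w_def c6 using E Jt \<beta>(1) by (intro sum_mono activity_le_exp_size) auto
    also have "\<dots> \<le> x" using E Jt by (intro fin) auto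
    finally show ?thesis .
  qed
  have incompat_sum: "(\<Sum>J\<in>Jt. if incompat E I J then w E J else 0) \<le> \<beta> * c5 * eta \<Gamma> * real (card (supp E I))"
    if E: "finite E" "E \<subseteq> \<Lambda>" and Jt: "finite Jt" "Jt \<subseteq> Jset \<Gamma> E" for E Jt I
  proof -
    have "(\<Sum>J\<in>Jt. if incompat E I J then w E J else 0) \<le> real M * real (card (supp E I))"
      using order_trans[OF local_sum[OF E Jt] x] by (intro sum_incompat_le[OF nb E Jt(1)]) (simp_all add: w_def)
    also have "\<dots> \<le> \<beta> * c5 * eta \<Gamma> * real (card (supp E I))" using \<beta>(2) by (simp add: mult_right_mono)
    finally show ?thesis .
  qed
  show ?thesis
  proof (intro conjI allI impI)
    fix E oe assume "finite E" "E \<subseteq> \<Lambda>"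
    then show "(\<lambda>J. exp (- \<beta> * c6 * size \<Lambda> E J)) summable_on {J \<in> Jset \<Gamma> E. oe \<in> supp E J}"
      and "(\<Sum>\<^sub>\<infinity>J\<in>{J \<in> Jset \<Gamma> E. oe \<in> supp E J}. exp (- \<beta> * c6 * size \<Lambda> E J)) \<le> x"
      using summable_on_infsum_le[OF _ fin] by auto
  next
    fix E Jt oe assume "finite E" "E \<subseteq> \<Lambda>" "finite Jt" "Jt \<subseteq> Jset \<Gamma> E"
    then show "(\<Sum>J\<in>{J\<in>Jt. oe \<in> supp E J}.
            exp (- \<beta> * c4 * size \<Lambda> E J) * exp (\<beta> * c5 * eta \<Gamma> * real (card (supp E J)))) \<le> x"
      using local_sum unfolding w_def by blast
  next
    fix E Jt I assume "finite E" "E \<subseteq> \<Lambda>" "finite Jt" "Jt \<subseteq> Jset \<Gamma> E"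
    then show "(\<Sum>J\<in>Jt. exp (- \<beta> * c4 * size \<Lambda> E J) * (if incompat E I J then 1 else 0)
                    * exp (\<beta> * c5 * eta \<Gamma> * real (card (supp E J))))
          \<le> \<beta> * c5 * eta \<Gamma> * real (card (supp E I))"
      using incompat_sum unfolding w_def by (simp add: if_distrib if_distribR cong: if_cong)
  qed
qed

theorem lemma3p3:
  fixes \<Gamma> :: "(real^3) set" and \<Lambda> :: "((real^3) \<times> (real^3)) set" and c c5 :: real
  defines "c3 \<equiv> 1 + 1 / eta \<Gamma>"
  defines "c4 \<equiv> c / (2 * c3)"
  defines "c6 \<equiv> c4 - c5"
  assumes lat: "rank3_lattice \<Gamma>"
      and graph: "periodic_bdd_graph \<Lambda>"
      and cpos: "c > 0"
      and c5: "0 < c5" "c5 < c4"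
  shows "\<exists>c7 > 0. \<exists>\<beta>0. \<forall>\<beta> > \<beta>0.
    (\<forall>E oe. finite E \<longrightarrow> E \<subseteq> \<Lambda> \<longrightarrow> oe \<in> E \<longrightarrow>
        (\<lambda>J. exp (- \<beta> * c6 * size \<Lambda> E J)) summable_on {J \<in> Jset \<Gamma> E. oe \<in> supp E J} \<and>
        (\<Sum>\<^sub>\<infinity>J\<in>{J \<in> Jset \<Gamma> E. oe \<in> supp E J}. exp (- \<beta> * c6 * size \<Lambda> E J))
           \<le> exp (- \<beta> * c7)) \<and>
    (\<forall>E Jt oe. finite E \<longrightarrow> E \<subseteq> \<Lambda> \<longrightarrow> finite Jt \<longrightarrow> Jt \<subseteq> Jset \<Gamma> E \<longrightarrow> oe \<in> E \<longrightarrow>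
        (\<Sum>J\<in>{J\<in>Jt. oe \<in> supp E J}.
            exp (- \<beta> * c4 * size \<Lambda> E J) * exp (\<beta> * c5 * eta \<Gamma> * real (card (supp E J))))
          \<le> exp (- \<beta> * c7)) \<and>
    (\<forall>E Jt I. finite E \<longrightarrow> E \<subseteq> \<Lambda> \<longrightarrow> finite Jt \<longrightarrow> Jt \<subseteq> Jset \<Gamma> E \<longrightarrow> I \<in> Jt \<longrightarrow>
        (\<Sum>J\<in>Jt. exp (- \<beta> * c4 * size \<Lambda> E J) * (if incompat E I J then 1 else 0)
                    * exp (\<beta> * c5 * eta \<Gamma> * real (card (supp E J))))
          \<le> \<beta> * c5 * eta \<Gamma> * real (card (supp E I)))"
proof -
  obtain \<delta> S0 where \<delta>: "\<delta> > 0" and S0: "S0 \<ge> 0" and \<delta>_eta: "\<delta> \<le> eta \<Gamma>"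
    and lattice_sum: "\<And>b T. 1 \<le> b \<Longrightarrow> finite T \<Longrightarrow> T \<subseteq> \<Gamma> - {0} \<Longrightarrow>
        (\<Sum>\<gamma>\<in>T. exp (- b * norm \<gamma>)) \<le> exp (- (b - 1) * \<delta>) * S0"
    using rank3_lattice_bounds[OF lat] by blast
  obtain M :: nat where nb: "\<And>e. finite (nbhd \<Lambda> e) \<and> card (nbhd \<Lambda> e) \<le> M"
    using periodic_bdd_graph_nbhd_bound[OF graph] by blast
  have "c6 > 0" using c5 by (simp add: c6_def)
  then have c7: "c6 * \<delta> / 2 > 0" using \<delta> by simp
  have large_sum: "\<forall>\<^sub>F \<beta> in at_top. \<forall>E JJ oe. finite E \<longrightarrow> E \<subseteq> \<Lambda> \<longrightarrow> finite JJ \<longrightarrow>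
      JJ \<subseteq> {J \<in> Jset \<Gamma> E. oe \<in> supp E J} \<longrightarrow>
      (\<Sum>J\<in>JJ. exp (- \<beta> * c6 * size \<Lambda> E J)) \<le> exp (- \<beta> * (c6 * \<delta> / 2))"
    by (rule eventually_sum_exp_size_le) (use \<delta> S0 \<open>c6 > 0\<close> lattice_sum nb in auto)
  have large_\<beta>: "\<forall>\<^sub>F \<beta> in at_top. 0 < \<beta> \<and> real M \<le> \<beta> * (c5 * eta \<Gamma>)"
    using c5(1) \<delta> \<delta>_eta by (intro eventually_conj eventually_gt_at_top eventually_le_mult_at_top) simp
  show ?thesis
    unfolding eventually_at_top_dense[symmetric]
    by (rule exI[of _ "c6 * \<delta> / 2"], rule conjI[OF c7],
        rule eventually_mono[OF eventually_conj[OF large_sum large_\<beta>]],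
        rule cluster_estimates[OF meta_eq_to_obj_eq[OF c6_def] _ nb])
      (blast, use c5(1) c7 in \<open>auto simp: mult.assoc intro!: mult_nonneg_nonneg\<close>)
qed

end
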